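(* Let $L$ be a finite field of characteristic $p$ and cardinality $q>2$. Let $s$ be a positive integer with $s\equiv 1\pmod{p-1}$ and $\gcd(s,q-1)=1$, and let $f\colon L\to L$ be the power function $f(x)=x^s$. Then $\mathfrak{D}(f)\equiv 0\pmod 3$.
   Context: Let $\mu$ be the canonical additive character of $L$, $\mu(x)=\exp(2i\pi\,\mathrm{Tr}(x)/p)$, where $\mathrm{Tr}$ is the trace of $L/\mathbb{F}_p$. The Fourier coefficient of $f$ at $a\in L$ is $\widehat{f}(a)=\sum_{x\in L}\mu(ax+f(x))$; under the hypothesis $s\equiv 1\pmod{p-1}$ these are rational integers. Define $\mathfrak{D}(f)=\prod_{a\in L^{\times}}\widehat{f}(a)$. *)

theory Defs
  imports "HOL-Analysis.Analysis" "HOL-Number_Theory.Number_Theory"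
begin

text \<open>Finite fields are types of class field and finite; p = CHAR('a), q = CARD('a) = p^n.\<close>

definition ff_degree :: "'a::{field,finite} itself \<Rightarrow> nat" where
  "ff_degree _ = (THE n. CARD('a) = CHAR('a) ^ n)"

definition ff_trace :: "'a::{field,finite} \<Rightarrow> 'a" where
  "ff_trace x = (\<Sum>i<ff_degree TYPE('a). x ^ (CHAR('a) ^ i))"

definition ff_trace_nat :: "'a::{field,finite} \<Rightarrow> nat" where
  "ff_trace_nat x = (THE k. k < CHAR('a) \<and> of_nat k = ff_trace x)"

definition can_char :: "'a::{field,finite} \<Rightarrow> complex" where
  "can_char x = exp (2 * pi * \<i> * of_nat (ff_trace_nat x) / of_nat CHAR('a))"

definition fourier_coeff :: "('a::{field,finite} \<Rightarrow> 'a) \<Rightarrow> 'a \<Rightarrow> complex" where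
  "fourier_coeff f a = (\<Sum>x\<in>UNIV. can_char (a * x + f x))"

definition frakD :: "('a::{field,finite} \<Rightarrow> 'a) \<Rightarrow> complex" where
  "frakD f = (\<Prod>a\<in>UNIV - {0}. fourier_coeff f a)"

end

theory Submission
  imports Defs
begin

text \<open>
  Let \<open>W b\<close> be the Fourier coefficient of \<open>x \<mapsto> x ^ s\<close> at \<open>b\<close>. Since \<open>c ^ s = c\<close> for \<open>c\<close>
  in the prime field, \<open>x \<mapsto> b x + x ^ s\<close> commutes with prime field scalars, so all nonzero
  values of the trace are taken equally often; hence \<open>W b = N\<^sub>0 - N\<^sub>1\<close> is an integer and
  \<open>W b \<equiv> q (mod p)\<close>. If \<open>p = 3\<close> this already makes every \<open>W b\<close> divisible by 3.

  Otherwise use that \<open>x \<mapsto> x ^ s\<close> permutes the field: \<open>W 0 = 0\<close>, the \<open>W b\<close> sum to \<open>q\<close>, and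
  \<open>\<Sum>\<^sub>b W b\<^sup>2 W (t b) = q\<^sup>2 M t\<close> for \<open>t \<noteq> 0\<close>, where \<open>M t\<close> counts the solutions of
  \<open>a ^ s + (1 - a) ^ s = t ^ -s\<close>, so that the \<open>M t\<close> with \<open>t \<noteq> 0\<close> sum to \<open>q\<close>. If no \<open>W b\<close> with
  \<open>b \<noteq> 0\<close> were divisible by 3, then \<open>W b\<^sup>2 \<equiv> 1 (mod 3)\<close> would give \<open>M t \<equiv> q (mod 3)\<close> for all
  \<open>t \<noteq> 0\<close>; summing yields \<open>q \<equiv> 2 (mod 3)\<close>, so every \<open>M t \<ge> 2\<close> and their sum is at least
  \<open>2 (q - 1) > q\<close>.
\<close>

section \<open>Prime fields inside finite fields\<close>

lemma prime_CHAR_finite: "prime CHAR('a::{field,finite})"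
  by (intro prime_CHAR_semidom finite_imp_CHAR_pos) simp

lemma CHAR_finite_gt_1: "CHAR('a::{field,finite}) > 1"
  using prime_CHAR_finite prime_gt_1_nat by blast

lemma of_nat_mod_CHAR: "(of_nat (n mod CHAR('a)) :: 'a::semiring_1_cancel) = of_nat n"
  by (simp add: of_nat_eq_iff_cong_CHAR)

lemma of_nat_inj_CHAR:
  "j < CHAR('a) \<Longrightarrow> k < CHAR('a) \<Longrightarrow> (of_nat j :: 'a::semiring_1_cancel) = of_nat k \<Longrightarrow> j = k"
  by (simp add: of_nat_eq_iff_cong_CHAR cong_less_modulus_unique_nat)

lemma of_nat_CHAR_minus_1:
  "CHAR('a) > 0 \<Longrightarrow> (of_nat (CHAR('a) - 1) :: 'a::ring_1) = -1"
proof -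
  assume "CHAR('a) > 0"
  then have "(of_nat (CHAR('a) - 1) :: 'a) + 1 = of_nat CHAR('a)"
    by (metis Suc_diff_1 of_nat_Suc add.commute)
  then show ?thesis by (simp add: eq_neg_iff_add_eq_0)
qed

lemma of_nat_power_CHAR:
  assumes "prime CHAR('a::comm_semiring_1)"
  shows "(of_nat j :: 'a) ^ CHAR('a) = of_nat j"
proof (induction j)
  case 0
  show ?case using assms by (simp add: prime_gt_0_nat zero_power)
next
  case (Suc j)
  then show ?case using freshmans_dream[OF assms refl, of "of_nat j" 1] by (simp add: add.commute)
qed

lemma of_nat_left_inverse_CHAR:
  assumes "prime CHAR('a::comm_semiring_1_cancel)" "\<not> CHAR('a) dvd d"
  obtains e where "(of_nat e :: 'a) * of_nat d = 1"
proof -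
  have "coprime d CHAR('a)"
    using prime_imp_coprime[OF assms] by (simp add: coprime_commute)
  then obtain e where "[d * e = 1] (mod CHAR('a))"
    using cong_solve_coprime_nat by auto
  then have "(of_nat (d * e) :: 'a) = of_nat 1"
    by (simp only: of_nat_eq_iff_cong_CHAR)
  then show thesis using that by (simp add: mult.commute)
qed

lemma power_eq_self_if_cong_one:
  fixes c :: "'a::monoid_mult"
  assumes "c ^ m = c" "k > 0" "[k = 1] (mod (m - 1))"
  shows "c ^ k = c"
proof (cases "m \<le> 1")
  case True
  then show ?thesis using assms(3) by (simp add: cong_def)
next
  case False
  have "(m - 1) dvd (k - 1)"
    using assms(2,3) by (simp add: cong_altdef_nat)
  then obtain t where k: "k = Suc ((m - 1) * t)"
    using assms(2) by (metis dvd_def Suc_diff_1)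
  have cm: "c * c ^ (m - 1) = c"
    using assms(1) False by (cases m) auto
  have "c * (c ^ (m - 1)) ^ t = c" for t
  proof (induction t)
    case (Suc t)
    then show ?case by (metis cm mult.assoc power_Suc)
  qed simp
  then show ?thesis by (simp add: k power_mult)
qed

lemma power_CARD_eq_self: "(x::'a::{field,finite}) ^ CARD('a) = x"
proof (cases "x = 0")
  case False
  let ?U = "UNIV - {0::'a}"
  have "\<Prod>?U = (\<Prod>y\<in>?U. x * y)"
    by (rule prod.reindex_bij_witness[of _ "\<lambda>y. x * y" "\<lambda>y. y / x"]) (use False in auto)
  also have "\<dots> = x ^ card ?U * \<Prod>?U"
    by (simp only: prod.distrib prod_constant)
  finally have "x ^ card ?U = 1"
    by simp
  moreover have "CARD('a) = Suc (card ?U)"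
    using finite_UNIV_card_ge_0[where 'a='a] by (simp add: card_Diff_singleton)
  ultimately show ?thesis
    by (metis power_Suc mult.right_neutral)
qed (simp add: zero_power)

lemma power_CHAR_eq_self_iff:
  "(x::'a::{field,finite}) ^ CHAR('a) = x \<longleftrightarrow> (\<exists>j<CHAR('a). x = of_nat j)"
proof
  let ?p = "CHAR('a)"
  define P :: "'a poly" where "P = Polynomial.monom 1 ?p - Polynomial.monom 1 1"
  have roots: "{y. y ^ ?p = y} = {y. poly P y = 0}"
    by (simp add: P_def poly_monom)
  have "Polynomial.coeff P ?p = 1"
    using CHAR_finite_gt_1[where 'a='a] by (simp add: P_def)
  then have "P \<noteq> 0" by auto
  then have "card {y::'a. y ^ ?p = y} \<le> Polynomial.degree P"
    unfolding roots by (rule card_poly_roots_bound)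
  also have "Polynomial.degree P \<le> ?p"
    unfolding P_def using CHAR_finite_gt_1[where 'a='a] degree_monom_le[of "1::'a" 1]
    by (intro degree_diff_le degree_monom_le) linarith
  finally have "card {y::'a. y ^ ?p = y} \<le> ?p" .
  moreover have "of_nat ` {..<?p} \<subseteq> {y::'a. y ^ ?p = y}"
    using of_nat_power_CHAR[OF prime_CHAR_finite] by auto
  moreover have "card (of_nat ` {..<?p} :: 'a set) = ?p"
    by (subst card_image) (auto simp: inj_on_def of_nat_eq_iff_cong_CHAR cong_def)
  ultimately have "of_nat ` {..<?p} = {y::'a. y ^ ?p = y}"
    using card_mono[of "{y::'a. y ^ ?p = y}" "of_nat ` {..<?p}"]
    by (intro card_subset_eq) simp_all
  moreover assume "x ^ ?p = x"
  ultimately show "\<exists>j<?p. x = of_nat j" by blast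
next
  assume "\<exists>j<CHAR('a). x = of_nat j"
  then show "x ^ CHAR('a) = x"
    using of_nat_power_CHAR[OF prime_CHAR_finite[where 'a='a]] by blast
qed

section \<open>The order of a finite field\<close>

definition add_submonoid :: "'a::monoid_add set \<Rightarrow> bool" where
  "add_submonoid U \<longleftrightarrow> 0 \<in> U \<and> (\<forall>x\<in>U. \<forall>y\<in>U. x + y \<in> U)"

lemma add_submonoid_of_nat_mult:
  fixes U :: "'a::semiring_1 set"
  assumes "add_submonoid U" "x \<in> U"
  shows "of_nat j * x \<in> U"
proof (induction j)
  case (Suc j)
  then show ?case using assms by (simp add: add_submonoid_def distrib_right)
qed (use assms in \<open>simp add: add_submonoid_def\<close>)

lemma add_submonoid_uminus:
  fixes U :: "'a::{ring_1,finite} set"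
  assumes "add_submonoid U" "x \<in> U"
  shows "- x \<in> U"
proof -
  have "of_nat (CHAR('a) - 1) * x \<in> U" by (rule add_submonoid_of_nat_mult[OF assms(1,2)])
  then show ?thesis by (simp only: of_nat_CHAR_minus_1[OF finite_imp_CHAR_pos[OF finite[of UNIV]]]) simp
qed

lemma add_submonoid_extend:
  fixes U :: "'a::{field,finite} set"
  assumes U: "add_submonoid U" and x: "x \<notin> U"
  defines "V \<equiv> (\<lambda>(u, j). u + of_nat j * x) ` (U \<times> {..<CHAR('a)})"
  shows "add_submonoid V" "card V = CHAR('a) * card U"
proof -
  let ?p = "CHAR('a)"
  have mem: "u + of_nat j * x \<in> V" if "u \<in> U" for u j
  proof -
    have "u + of_nat j * x = u + of_nat (j mod ?p) * x" by (simp add: of_nat_mod_CHAR)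
    then show ?thesis
      unfolding V_def using that CHAR_finite_gt_1[where 'a='a]
      by (auto intro!: image_eqI[of _ _ "(u, j mod ?p)"])
  qed
  show "add_submonoid V"
    unfolding add_submonoid_def
  proof (intro conjI ballI)
    show "0 \<in> V" using mem[of 0 0] U by (simp add: add_submonoid_def)
  next
    fix v w assume "v \<in> V" "w \<in> V"
    then obtain u1 j1 u2 j2 where "u1 \<in> U" "u2 \<in> U" "v = u1 + of_nat j1 * x" "w = u2 + of_nat j2 * x"
      unfolding V_def by auto
    moreover have "u1 + u2 \<in> U" using U \<open>u1 \<in> U\<close> \<open>u2 \<in> U\<close> by (simp add: add_submonoid_def)
    ultimately show "v + w \<in> V"
      using mem[of "u1 + u2" "j1 + j2"] by (simp add: algebra_simps)
  qed
  have coset_disjoint: "u1 + of_nat j1 * x \<noteq> u2 + of_nat j2 * x"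
    if u: "u1 \<in> U" "u2 \<in> U" and j: "j1 < j2" "j2 < ?p" for u1 u2 j1 j2
  proof
    assume "u1 + of_nat j1 * x = u2 + of_nat j2 * x"
    then have "of_nat (j2 - j1) * x = u1 + - u2"
      using j(1) by (simp add: algebra_simps)
    moreover obtain e where e: "(of_nat e :: 'a) * of_nat (j2 - j1) = 1"
    proof (rule of_nat_left_inverse_CHAR[OF prime_CHAR_finite])
      show "\<not> ?p dvd j2 - j1" using j by (auto dest: dvd_imp_le)
    qed
    ultimately have "x = of_nat e * (u1 + - u2)"
      by (metis mult.assoc mult_1)
    moreover have "u1 + - u2 \<in> U"
      using U u(1) add_submonoid_uminus[OF U u(2)] unfolding add_submonoid_def by blast
    ultimately show False
      using x add_submonoid_of_nat_mult[OF U] by auto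
  qed
  have "inj_on (\<lambda>(u, j). u + of_nat j * x) (U \<times> {..<?p})"
  proof (rule inj_onI, clarify)
    fix u1 j1 u2 j2
    assume *: "u1 \<in> U" "j1 < ?p" "u2 \<in> U" "j2 < ?p" "u1 + of_nat j1 * x = u2 + of_nat j2 * x"
    then have "j1 = j2"
      using coset_disjoint by (metis linorder_neqE_nat)
    with * show "u1 = u2 \<and> j1 = j2" by simp
  qed
  then show "card V = ?p * card U"
    unfolding V_def by (simp add: card_image card_cartesian_product)
qed

lemma CARD_eq_CHAR_power: "\<exists>n. CARD('a::{field,finite}) = CHAR('a) ^ n"
proof -
  have "\<exists>n. CARD('a) = CHAR('a) ^ n"
    if "add_submonoid U" "card U = CHAR('a) ^ k" for U :: "'a set" and k
    using that
  proof (induction "CARD('a) - card U" arbitrary: U k rule: less_induct)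
    case less
    show ?case
    proof (cases "U = UNIV")
      case False
      then obtain x where x: "x \<notin> U" by auto
      define V where "V = (\<lambda>(u, j). u + of_nat j * x) ` (U \<times> {..<CHAR('a)})"
      have V: "add_submonoid V" "card V = CHAR('a) * card U"
        using add_submonoid_extend[OF less.prems(1) x] unfolding V_def by simp_all
      have "card V \<le> CARD('a)" by (rule card_mono) auto
      moreover have "card U < card V"
        using V(2) less.prems(2) CHAR_finite_gt_1[where 'a='a] by simp
      ultimately have "CARD('a) - card V < CARD('a) - card U" by linarith
      moreover have "card V = CHAR('a) ^ Suc k"
        using V(2) less.prems(2) by simp
      ultimately show ?thesis using less.hyps V(1) by blast
    qed (use less.prems in auto)
  qed
  from this[of "{0}" 0] show ?thesis by (simp add: add_submonoid_def)
qed

lemma CARD_eq_CHAR_power_ff_degree: "CARD('a::{field,finite}) = CHAR('a) ^ ff_degree TYPE('a)"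
proof -
  obtain n where n: "CARD('a) = CHAR('a) ^ n"
    using CARD_eq_CHAR_power by blast
  have "ff_degree TYPE('a) = n"
    unfolding ff_degree_def
  proof (rule the_equality)
    fix m assume "CARD('a) = CHAR('a) ^ m"
    with n show "m = n" using CHAR_finite_gt_1[where 'a='a] by simp
  qed (rule n)
  with n show ?thesis by simp
qed

lemma ff_degree_pos: "ff_degree TYPE('a::{field,finite}) > 0"
proof -
  have "card {0::'a, 1} \<le> CARD('a)" by (rule card_mono) auto
  then show ?thesis
    using CARD_eq_CHAR_power_ff_degree[where 'a='a] by (intro gr0I) simp
qed

lemma prime_dvd_CARD_eq_CHAR:
  assumes "prime r" "r dvd CARD('a::{field,finite})"
  shows "r = CHAR('a)"
proof (rule primes_dvd_imp_eq[OF assms(1) prime_CHAR_finite])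
  show "r dvd CHAR('a)"
    using assms(2) unfolding CARD_eq_CHAR_power_ff_degree[where 'a='a] by (rule prime_dvd_power[OF assms(1)])
qed

section \<open>The absolute trace\<close>

lemma ff_trace_add: "ff_trace ((x::'a::{field,finite}) + y) = ff_trace x + ff_trace y"
  unfolding ff_trace_def
  by (simp add: freshmans_dream'[OF prime_CHAR_finite refl] sum.distrib)

lemma ff_trace_of_nat_mult: "ff_trace ((of_nat j :: 'a::{field,finite}) * x) = of_nat j * ff_trace x"
proof -
  have "(of_nat j :: 'a) ^ (CHAR('a) ^ i) = of_nat j" for i
    by (induction i) (simp_all add: power_mult of_nat_power_CHAR[OF prime_CHAR_finite])
  then show ?thesis
    unfolding ff_trace_def by (simp add: power_mult_distrib sum_distrib_left)
qed

lemma ff_trace_power_CHAR: "ff_trace (x::'a::{field,finite}) ^ CHAR('a) = ff_trace x"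
proof -
  let ?n = "ff_degree TYPE('a)"
  define f where "f i = x ^ (CHAR('a) ^ i)" for i
  have "ff_trace x ^ CHAR('a) = (\<Sum>i<?n. f i ^ CHAR('a))"
    unfolding ff_trace_def f_def by (rule freshmans_dream_sum[OF prime_CHAR_finite refl])
  also have "\<dots> = (\<Sum>i<?n. f (Suc i))"
    unfolding f_def by (simp only: power_Suc2 power_mult)
  also have "\<dots> = (\<Sum>i<?n. f i)"
  proof -
    have "f ?n = f 0"
      unfolding f_def using CARD_eq_CHAR_power_ff_degree[where 'a='a] power_CARD_eq_self[of x] by simp
    then show ?thesis
      using sum.lessThan_Suc_shift[of f ?n] sum.lessThan_Suc[of f ?n] by simp
  qed
  finally show ?thesis unfolding ff_trace_def f_def .
qed

lemma ff_trace_in_prime_field: "\<exists>j<CHAR('a). ff_trace (x::'a::{field,finite}) = of_nat j"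
  using ff_trace_power_CHAR[of x] power_CHAR_eq_self_iff by blast

lemma ff_trace_not_identically_zero: "\<exists>x::'a::{field,finite}. ff_trace x \<noteq> 0"
proof (rule ccontr)
  let ?p = "CHAR('a)" and ?n = "ff_degree TYPE('a)"
  \<comment> \<open>The trace is a polynomial function of degree \<open>p ^ (n - 1) < q\<close>.\<close>
  define P :: "'a poly" where "P = (\<Sum>i<?n. Polynomial.monom 1 (?p ^ i))"
  have coeff_P: "Polynomial.coeff P m = (\<Sum>i<?n. if ?p ^ i = m then 1 else 0)" for m
    unfolding P_def by (simp add: Polynomial.coeff_sum)
  have "Polynomial.coeff P (?p ^ (?n - 1)) = 1"
    unfolding coeff_P using CHAR_finite_gt_1[where 'a='a] ff_degree_pos[where 'a='a]
    by simp
  then have "P \<noteq> 0" by auto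
  have "Polynomial.degree P \<le> ?p ^ (?n - 1)"
  proof (rule Polynomial.degree_le, intro allI impI)
    fix m assume m: "?p ^ (?n - 1) < m"
    have "?p ^ i < m" if "i < ?n" for i
    proof -
      have "?p ^ i \<le> ?p ^ (?n - 1)"
        using that CHAR_finite_gt_1[where 'a='a] by (intro power_increasing) auto
      with m show ?thesis by linarith
    qed
    then show "Polynomial.coeff P m = 0" unfolding coeff_P by (intro sum.neutral) auto
  qed
  assume "\<not> (\<exists>x::'a. ff_trace x \<noteq> 0)"
  then have "{x. poly P x = 0} = UNIV"
    by (auto simp: P_def poly_sum poly_monom ff_trace_def)
  then have "CARD('a) \<le> ?p ^ (?n - 1)"
    using card_poly_roots_bound[OF \<open>P \<noteq> 0\<close>] \<open>Polynomial.degree P \<le> _\<close> by simp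
  moreover have "?p ^ (?n - 1) < ?p ^ ?n"
    using CHAR_finite_gt_1[where 'a='a] ff_degree_pos[where 'a='a] by simp
  ultimately show False
    using CARD_eq_CHAR_power_ff_degree[where 'a='a] by simp
qed

lemma ff_trace_nat:
  "ff_trace_nat (x::'a::{field,finite}) < CHAR('a)" "of_nat (ff_trace_nat x) = ff_trace x"
proof -
  have "\<exists>!k. k < CHAR('a) \<and> of_nat k = ff_trace x"
    using ff_trace_in_prime_field[of x] of_nat_inj_CHAR[where 'a='a] by metis
  from theI'[OF this] show "ff_trace_nat x < CHAR('a)" "of_nat (ff_trace_nat x) = ff_trace x"
    unfolding ff_trace_nat_def by simp_all
qed

lemma ff_trace_nat_eq_iff:
  "j < CHAR('a) \<Longrightarrow> ff_trace_nat (x::'a::{field,finite}) = j \<longleftrightarrow> ff_trace x = of_nat j"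
  using ff_trace_nat[of x] of_nat_inj_CHAR[where 'a='a] by metis

section \<open>The canonical additive character\<close>

lemma sum_reindex_inj_finite:
  fixes h :: "'a::finite \<Rightarrow> 'a" and g :: "'a \<Rightarrow> 'b::comm_monoid_add"
  assumes "inj h"
  shows "(\<Sum>x\<in>UNIV. g (h x)) = (\<Sum>x\<in>UNIV. g x)"
  using sum.reindex[OF assms, of g] finite_UNIV_inj_surj[OF _ assms] by simp

lemma sum_exp_roots_of_unity:
  assumes "n > 1"
  shows "(\<Sum>j<n. exp (2 * of_real pi * \<i> * of_nat j / of_nat n)) = 0"
proof -
  have "(\<Sum>j<n. exp (2 * of_real pi * \<i> * of_nat j / of_nat n)) = \<Sum>{z::complex. z ^ n = 1}"
    using sum.reindex_bij_betw[OF Complex_Transcendental.bij_betw_roots_unity, of id n]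
      complex_roots_unity[of n] assms by simp
  also have "\<dots> = 0" by (rule sum_roots_unity) fact
  finally show ?thesis .
qed

lemma can_char_of_trace:
  assumes "ff_trace (x::'a::{field,finite}) = of_nat j"
  shows "can_char x = exp (2 * pi * \<i> * of_nat j / of_nat CHAR('a))"
proof -
  have "ff_trace_nat x mod CHAR('a) = j mod CHAR('a)"
    using ff_trace_nat(2)[of x] assms by (simp add: of_nat_eq_iff_cong_CHAR cong_def)
  then show ?thesis
    unfolding can_char_def using complex_root_unity_eq[of "CHAR('a)"] CHAR_finite_gt_1[where 'a='a]
    by simp
qed

lemma can_char_add: "can_char ((x::'a::{field,finite}) + y) = can_char x * can_char y"
proof -
  obtain a b where a: "ff_trace x = of_nat a" and b: "ff_trace y = of_nat b"
    using ff_trace_in_prime_field by metis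
  then have "ff_trace (x + y) = of_nat (a + b)" by (simp add: ff_trace_add)
  then have "can_char (x + y) = exp (2 * pi * \<i> * of_nat (a + b) / of_nat CHAR('a))"
    by (rule can_char_of_trace)
  also have "\<dots> = exp (2 * pi * \<i> * of_nat a / of_nat CHAR('a)) * exp (2 * pi * \<i> * of_nat b / of_nat CHAR('a))"
    by (simp add: add_divide_distrib distrib_left exp_add)
  finally show ?thesis
    by (simp only: can_char_of_trace[OF a] can_char_of_trace[OF b])
qed

lemma can_char_0: "can_char (0::'a::{field,finite}) = 1"
proof -
  have "ff_trace (0::'a) = of_nat 0" using ff_trace_of_nat_mult[of 0 "0::'a"] by simp
  from can_char_of_trace[OF this] show ?thesis by simp
qed

lemma sum_can_char: "(\<Sum>x\<in>UNIV. can_char (x::'a::{field,finite})) = 0"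
proof -
  obtain x0 :: 'a where x0: "ff_trace x0 \<noteq> 0"
    using ff_trace_not_identically_zero by blast
  obtain j where j: "j < CHAR('a)" "ff_trace x0 = of_nat j"
    using ff_trace_in_prime_field by blast
  have nontrivial: "can_char x0 \<noteq> 1"
    using can_char_of_trace[OF j(2)] complex_root_unity_eq_1[of "CHAR('a)" j] j x0
      CHAR_finite_gt_1[where 'a='a]
    by (auto dest: dvd_imp_le)
  have "(\<Sum>x\<in>UNIV. can_char (x::'a)) = (\<Sum>x\<in>UNIV. can_char (x + x0))"
    using sum_reindex_inj_finite[of "\<lambda>x. x + x0" can_char] by (simp add: inj_def)
  also have "\<dots> = (\<Sum>x\<in>UNIV. can_char (x::'a)) * can_char x0"
    by (simp add: can_char_add sum_distrib_right)
  finally show ?thesis using nontrivial by simp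
qed

lemma sum_can_char_mult:
  "(\<Sum>x\<in>UNIV. can_char ((a::'a::{field,finite}) * x)) = (if a = 0 then of_nat CARD('a) else 0)"
  using sum_can_char sum_reindex_inj_finite[of "\<lambda>x. a * x" can_char]
  by (auto simp: can_char_0 inj_def)

section \<open>Fourier coefficients\<close>

lemma card_Collect_inj_finite:
  fixes h :: "'a::finite \<Rightarrow> 'a"
  assumes "inj h"
  shows "card {x. P (h x)} = card {x. P x}"
proof -
  have "range h = UNIV"
    using finite_UNIV_inj_surj[OF _ assms] by simp
  then show ?thesis
    using card_vimage_inj[OF assms, of "{x. P x}"] by (simp add: vimage_def)
qed

lemma card_trace_level_homogeneous:
  fixes g :: "'a::{field,finite} \<Rightarrow> 'a"
  assumes hom: "\<And>j x. g (of_nat j * x) = of_nat j * g x" and j: "\<not> CHAR('a) dvd j"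
  shows "card {x. ff_trace (g x) = of_nat j} = card {x. ff_trace (g x) = 1}"
proof -
  let ?c = "of_nat j :: 'a"
  have c: "?c \<noteq> 0" using j by (simp add: of_nat_eq_0_iff_char_dvd)
  have "ff_trace (g (?c * x)) = ?c \<longleftrightarrow> ff_trace (g x) = 1" for x
    using c by (simp add: hom ff_trace_of_nat_mult)
  then have "card {x. ff_trace (g x) = 1} = card {x. ff_trace (g (?c * x)) = ?c}"
    by simp
  also have "\<dots> = card {x. ff_trace (g x) = ?c}"
    by (rule card_Collect_inj_finite) (use c in \<open>simp add: inj_def\<close>)
  finally show ?thesis ..
qed

lemma card_eq_sum_trace_levels:
  fixes g :: "'a::{field,finite} \<Rightarrow> 'a"
  shows "CARD('a) = (\<Sum>j<CHAR('a). card {x. ff_trace (g x) = of_nat j})"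
proof -
  have "CARD('a) = (\<Sum>j<CHAR('a). card {x. ff_trace_nat (g x) = j})"
    using sum_fun_comp[of UNIV "{..<CHAR('a)}" "\<lambda>x. ff_trace_nat (g x)" "\<lambda>_. 1::nat"]
      ff_trace_nat(1) by auto
  also have "\<dots> = (\<Sum>j<CHAR('a). card {x. ff_trace (g x) = of_nat j})"
    by (intro sum.cong refl) (simp add: ff_trace_nat_eq_iff)
  finally show ?thesis .
qed

lemma card_trace_levels_homogeneous:
  fixes g :: "'a::{field,finite} \<Rightarrow> 'a"
  assumes hom: "\<And>j x. g (of_nat j * x) = of_nat j * g x"
  shows "card {x. ff_trace (g x) = 0} + (CHAR('a) - 1) * card {x. ff_trace (g x) = 1} = CARD('a)"
proof -
  obtain m where p: "CHAR('a) = Suc m"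
    using CHAR_finite_gt_1[where 'a='a] less_imp_Suc_add by blast
  have "CARD('a) = (\<Sum>j<Suc m. card {x. ff_trace (g x) = of_nat j})"
    using card_eq_sum_trace_levels[of g] by (simp only: p)
  also have "\<dots> = card {x. ff_trace (g x) = 0} + m * card {x. ff_trace (g x) = 1}"
  proof -
    have "card {x. ff_trace (g x) = of_nat (Suc j)} = card {x. ff_trace (g x) = 1}" if "j < m" for j
      using card_trace_level_homogeneous[OF hom, of "Suc j"] that p nat_dvd_not_less[of "Suc j"]
      by simp
    then show ?thesis by (simp only: sum.lessThan_Suc_shift) simp
  qed
  finally show ?thesis by (simp add: p)
qed

lemma sum_can_char_homogeneous:
  fixes g :: "'a::{field,finite} \<Rightarrow> 'a"
  assumes hom: "\<And>j x. g (of_nat j * x) = of_nat j * g x"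
  shows "(\<Sum>x\<in>UNIV. can_char (g x)) =
    of_int (int (card {x. ff_trace (g x) = 0}) - int (card {x. ff_trace (g x) = 1}))"
proof -
  define e :: "nat \<Rightarrow> complex" where "e j = exp (2 * pi * \<i> * of_nat j / of_nat CHAR('a))" for j
  define N where "N j = card {x. ff_trace (g x) = of_nat j}" for j
  obtain m where p: "CHAR('a) = Suc m"
    using CHAR_finite_gt_1[where 'a='a] less_imp_Suc_add by blast
  have "(\<Sum>x\<in>UNIV. can_char (g x)) = (\<Sum>x\<in>UNIV. e (ff_trace_nat (g x)))"
    by (simp add: can_char_def e_def)
  also have "\<dots> = (\<Sum>j<CHAR('a). of_nat (card {x \<in> UNIV. ff_trace_nat (g x) = j}) * e j)"
    by (rule sum_fun_comp) (auto simp: ff_trace_nat(1))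
  also have "\<dots> = (\<Sum>j<Suc m. of_nat (N j) * e j)"
    unfolding p[symmetric] N_def by (intro sum.cong refl) (simp add: ff_trace_nat_eq_iff)
  also have "\<dots> = of_nat (N 0) + of_nat (N 1) * (\<Sum>j<m. e (Suc j))"
  proof -
    have level: "N (Suc j) = N 1" if "j < m" for j
      using card_trace_level_homogeneous[OF hom, of "Suc j"] that p nat_dvd_not_less[of "Suc j"]
      by (simp add: N_def)
    have "(\<Sum>j<m. of_nat (N (Suc j)) * e (Suc j)) = (\<Sum>j<m. of_nat (N 1) * e (Suc j))"
      by (intro sum.cong refl) (simp only: level lessThan_iff)
    then show ?thesis
      by (simp only: sum.lessThan_Suc_shift) (simp add: e_def sum_distrib_left)
  qed
  also have "(\<Sum>j<m. e (Suc j)) = -1"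
  proof -
    have "(\<Sum>j<Suc m. e j) = 0"
      using sum_exp_roots_of_unity[OF CHAR_finite_gt_1[where 'a='a]] by (simp add: e_def p)
    then show ?thesis
      by (simp only: sum.lessThan_Suc_shift) (simp add: e_def eq_neg_iff_add_eq_0 add.commute)
  qed
  finally show ?thesis by (simp add: N_def)
qed

lemma fourier_coeff_integral_cong_CARD:
  fixes f :: "'a::{field,finite} \<Rightarrow> 'a"
  assumes hom: "\<And>j x. f (of_nat j * x) = of_nat j * f x"
  shows "\<exists>w::'a \<Rightarrow> int. \<forall>b. fourier_coeff f b = of_int (w b) \<and> [w b = int CARD('a)] (mod int CHAR('a))"
proof -
  have "\<exists>v::int. fourier_coeff f b = of_int v \<and> [v = int CARD('a)] (mod int CHAR('a))" for b
  proof -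
  let ?g = "\<lambda>x. b * x + f x"
  let ?N0 = "card {x. ff_trace (?g x) = 0}" and ?N1 = "card {x. ff_trace (?g x) = 1}"
  have hom_g: "?g (of_nat j * x) = of_nat j * ?g x" for j x
    unfolding hom by (simp add: ring_distribs mult.left_commute)
  have "int (?N0 + (CHAR('a) - 1) * ?N1) = int CARD('a)"
    using card_trace_levels_homogeneous[OF hom_g] by (rule arg_cong)
  then have "int ?N0 - int ?N1 = int CARD('a) - int CHAR('a) * int ?N1"
    using CHAR_finite_gt_1[where 'a='a] by (simp add: left_diff_distrib)
  then have "[int ?N0 - int ?N1 = int CARD('a)] (mod int CHAR('a))"
    by (simp add: cong_iff_dvd_diff)
  moreover have "fourier_coeff f b = of_int (int ?N0 - int ?N1)"
    unfolding fourier_coeff_def by (rule sum_can_char_homogeneous[OF hom_g])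
  ultimately show ?thesis by blast
  qed
  then show ?thesis by (intro choice allI)
qed

lemma sum_fourier_coeff:
  "(\<Sum>b\<in>UNIV. fourier_coeff f b) = of_nat CARD('a::{field,finite}) * can_char (f (0::'a))"
proof -
  have "(\<Sum>b\<in>UNIV. fourier_coeff f b) = (\<Sum>x\<in>UNIV. can_char (f x) * (\<Sum>b\<in>UNIV. can_char (x * b)))"
    unfolding fourier_coeff_def sum_distrib_left
    by (subst sum.swap) (simp add: can_char_add mult.commute add.commute)
  also have "\<dots> = of_nat CARD('a) * can_char (f 0)"
    by (simp add: sum_can_char_mult if_distrib mult.commute cong: if_cong)
  finally show ?thesis .
qed

lemma fourier_coeff_0_inj:
  fixes f :: "'a::{field,finite} \<Rightarrow> 'a"
  assumes "inj f"
  shows "fourier_coeff f 0 = 0"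
  unfolding fourier_coeff_def using sum_reindex_inj_finite[OF assms, of can_char] sum_can_char
  by simp

lemma fourier_coeff_cube_expand:
  "fourier_coeff f b * fourier_coeff f b * fourier_coeff f (t * b) =
    (\<Sum>x\<in>UNIV. \<Sum>y\<in>UNIV. \<Sum>z\<in>UNIV.
      can_char (f x + f y + f z) * can_char ((x + y + t * z) * (b::'a::{field,finite})))"
proof -
  have pointwise: "can_char (b * x + f x) * can_char (b * y + f y) * can_char (t * b * z + f z) =
    can_char (f x + f y + f z) * can_char ((x + y + t * z) * b)" for x y z
    by (simp only: can_char_add[symmetric]) (simp add: algebra_simps)
  have "fourier_coeff f b * fourier_coeff f b * fourier_coeff f (t * b) =
    (\<Sum>x\<in>UNIV. \<Sum>y\<in>UNIV. can_char (b * x + f x) * can_char (b * y + f y)) *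
    (\<Sum>z\<in>UNIV. can_char (t * b * z + f z))"
    unfolding fourier_coeff_def by (subst sum_product) (rule refl)
  also have "\<dots> = (\<Sum>x\<in>UNIV. \<Sum>y\<in>UNIV. \<Sum>z\<in>UNIV.
    can_char (b * x + f x) * can_char (b * y + f y) * can_char (t * b * z + f z))"
    by (simp only: sum_distrib_right) (simp only: sum_distrib_left)
  finally show ?thesis by (simp only: pointwise)
qed

lemma sum_fourier_coeff_triple:
  fixes f :: "'a::{field,finite} \<Rightarrow> 'a"
  assumes "t \<noteq> 0"
  shows "(\<Sum>b\<in>UNIV. fourier_coeff f b * fourier_coeff f b * fourier_coeff f (t * b)) =
    of_nat CARD('a) * (\<Sum>x\<in>UNIV. \<Sum>y\<in>UNIV. can_char (f x + f y + f (- (x + y) / t)))"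
proof -
  let ?F = "\<lambda>x y z. can_char (f x + f y + f z)"
  have "(\<Sum>b\<in>UNIV. fourier_coeff f b * fourier_coeff f b * fourier_coeff f (t * b)) =
    (\<Sum>b\<in>UNIV. \<Sum>x\<in>UNIV. \<Sum>y\<in>UNIV. \<Sum>z\<in>UNIV. ?F x y z * can_char ((x + y + t * z) * b))"
    by (simp only: fourier_coeff_cube_expand)
  also have "\<dots> = (\<Sum>x\<in>UNIV. \<Sum>b\<in>UNIV. \<Sum>y\<in>UNIV. \<Sum>z\<in>UNIV. ?F x y z * can_char ((x + y + t * z) * b))"
    by (rule sum.swap)
  also have "\<dots> = (\<Sum>x\<in>UNIV. \<Sum>y\<in>UNIV. \<Sum>b\<in>UNIV. \<Sum>z\<in>UNIV. ?F x y z * can_char ((x + y + t * z) * b))"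
    by (rule sum.cong[OF refl], rule sum.swap)
  also have "\<dots> = (\<Sum>x\<in>UNIV. \<Sum>y\<in>UNIV. \<Sum>z\<in>UNIV. ?F x y z * (\<Sum>b\<in>UNIV. can_char ((x + y + t * z) * b)))"
    by (rule sum.cong[OF refl], rule sum.cong[OF refl], subst sum.swap) (simp only: sum_distrib_left)
  also have "\<dots> = (\<Sum>x\<in>UNIV. \<Sum>y\<in>UNIV. of_nat CARD('a) * ?F x y (- (x + y) / t))"
  proof (intro sum.cong refl)
    fix x y :: 'a
    have root: "x + y + t * z = 0 \<longleftrightarrow> z = - (x + y) / t" for z
    proof -
      have "x + y + t * z = 0 \<longleftrightarrow> t * z = - (x + y)"
        by (metis add.commute eq_neg_iff_add_eq_0)
      also have "\<dots> \<longleftrightarrow> z = - (x + y) / t"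
        using assms by (auto simp: field_simps)
      finally show ?thesis .
    qed
    then show "(\<Sum>z\<in>UNIV. ?F x y z * (\<Sum>b\<in>UNIV. can_char ((x + y + t * z) * b))) =
      of_nat CARD('a) * ?F x y (- (x + y) / t)"
      by (simp only: sum_can_char_mult root) (simp add: if_distrib mult.commute cong: if_cong)
  qed
  finally show ?thesis by (simp add: sum_distrib_left)
qed

section \<open>Power permutations\<close>

lemma of_nat_mult_power_cong_one:
  assumes "s > 0" "[s = 1] (mod (CHAR('a) - 1))"
  shows "((of_nat j :: 'a::{field,finite}) * x) ^ s = of_nat j * x ^ s"
  using power_eq_self_if_cong_one[OF of_nat_power_CHAR[OF prime_CHAR_finite] assms]
  by (simp add: power_mult_distrib)

lemma inj_power_if_coprime:
  assumes "s > 0" "coprime s (CARD('a::{field,finite}) - 1)"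
  shows "inj (\<lambda>x::'a. x ^ s)"
proof -
  let ?q = "CARD('a)"
  have "card {0::'a, 1} \<le> ?q" by (rule card_mono) auto
  then have q: "?q \<ge> 2" by simp
  define n where "n = ?q - 1"
  obtain r where "[s * r = 1] (mod n)"
    using cong_solve_coprime_nat[OF assms(2)] unfolding n_def by auto
  \<comment> \<open>\<open>r + n\<close> instead of \<open>r\<close>: the exponent must be positive even if \<open>s * r = 0\<close>.\<close>
  then have r: "[s * (r + n) = 1] (mod n)"
    unfolding cong_def by (simp add: distrib_left)
  have "(x ^ s) ^ (r + (?q - 1)) = x" for x :: 'a
    using power_eq_self_if_cong_one[OF power_CARD_eq_self _ r[unfolded n_def]] assms(1) q
    by (simp add: power_mult)
  then show ?thesis by (metis injI)
qed

lemma pos_if_inj_power: "inj (\<lambda>x::'a::{semiring_1,zero_neq_one}. x ^ s) \<Longrightarrow> s > 0"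
  by (rule ccontr) (auto dest: injD[of _ 0 1])

lemma power_minus_one_if_inj: "inj (\<lambda>x::'a::ring_1. x ^ s) \<Longrightarrow> (-1 :: 'a) ^ s = -1"
  by (cases "even s") (auto dest: injD[of _ "-1" 1])

lemma sum_can_char_power_mult:
  assumes "inj (\<lambda>x::'a::{field,finite}. x ^ s)"
  shows "(\<Sum>m\<in>UNIV. can_char (m ^ s * (c::'a))) = (if c = 0 then of_nat CARD('a) else 0)"
  using sum_reindex_inj_finite[OF assms, of "\<lambda>m. can_char (m * c)"] sum_can_char_mult[of c]
  by (simp add: mult.commute)

lemma sum_can_char_power_diagonal:
  fixes u :: "'a::{field,finite}"
  assumes inj: "inj (\<lambda>x::'a. x ^ s)"
  shows "(\<Sum>x\<in>UNIV. \<Sum>y\<in>UNIV. can_char (x ^ s + y ^ s - u * (x + y) ^ s)) =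
    of_nat CARD('a) * of_nat (card {a. a ^ s + (1 - a) ^ s = u})"
proof -
  let ?c = "\<lambda>a::'a. a ^ s + (1 - a) ^ s - u"
  have s: "s > 0" by (rule pos_if_inj_power[OF inj])
  have substitution: "(\<Sum>x\<in>UNIV. can_char (x ^ s + (m - x) ^ s - u * m ^ s)) =
    (\<Sum>a\<in>UNIV. can_char (m ^ s * ?c a))" for m
  proof (cases "m = 0")
    case True
    have "(- x) ^ s = - (x ^ s)" for x :: 'a
      using power_minus_one_if_inj[OF inj] by (metis mult_minus1 power_minus)
    with True s show ?thesis by (simp add: zero_power)
  next
    case False
    have "(m * a) ^ s + (m - m * a) ^ s - u * m ^ s = m ^ s * ?c a" for a
    proof -
      have "m - m * a = m * (1 - a)" by (simp add: algebra_simps)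
      then show ?thesis by (simp only: power_mult_distrib) (simp add: algebra_simps)
    qed
    then show ?thesis
      using sum_reindex_inj_finite[of "\<lambda>a. m * a" "\<lambda>x. can_char (x ^ s + (m - x) ^ s - u * m ^ s)"] False
      by (simp add: inj_def)
  qed
  have "(\<Sum>x\<in>UNIV. \<Sum>y\<in>UNIV. can_char (x ^ s + y ^ s - u * (x + y) ^ s)) =
    (\<Sum>x\<in>UNIV. \<Sum>m\<in>UNIV. can_char (x ^ s + (m - x) ^ s - u * m ^ s))"
  proof (rule sum.cong[OF refl])
    fix x :: 'a
    show "(\<Sum>y\<in>UNIV. can_char (x ^ s + y ^ s - u * (x + y) ^ s)) =
      (\<Sum>m\<in>UNIV. can_char (x ^ s + (m - x) ^ s - u * m ^ s))"
      using sum_reindex_inj_finite[of "\<lambda>m. m - x" "\<lambda>y. can_char (x ^ s + y ^ s - u * (x + y) ^ s)"]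
      by (simp add: inj_def)
  qed
  also have "\<dots> = (\<Sum>m\<in>UNIV. \<Sum>a\<in>UNIV. can_char (m ^ s * ?c a))"
    by (subst sum.swap) (simp only: substitution)
  also have "\<dots> = (\<Sum>a\<in>UNIV. if ?c a = 0 then of_nat CARD('a) else 0)"
    by (subst sum.swap) (simp only: sum_can_char_power_mult[OF inj])
  also have "\<dots> = of_nat CARD('a) * of_nat (card {a. a ^ s + (1 - a) ^ s = u})"
    by (simp add: sum.If_cases)
  finally show ?thesis .
qed

lemma sum_fourier_coeff_power_triple:
  fixes t :: "'a::{field,finite}"
  assumes inj: "inj (\<lambda>x::'a. x ^ s)" and t: "t \<noteq> 0"
  shows "(\<Sum>b\<in>UNIV. fourier_coeff (\<lambda>x. x ^ s) b * fourier_coeff (\<lambda>x. x ^ s) b *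
      fourier_coeff (\<lambda>x. x ^ s) (t * b)) =
    of_nat (CARD('a) ^ 2 * card {a. a ^ s + (1 - a) ^ s = inverse (t ^ s)})"
proof -
  have "(- (x + y) / t) ^ s = - (inverse (t ^ s) * (x + y) ^ s)" for x y :: 'a
  proof -
    have "(- (x + y) / t) ^ s = (-1) ^ s * (x + y) ^ s * inverse t ^ s"
      by (simp only: power_mult_distrib[symmetric]) (simp add: divide_inverse)
    then show ?thesis
      by (simp add: power_minus_one_if_inj[OF inj] power_inverse)
  qed
  then show ?thesis
    unfolding sum_fourier_coeff_triple[OF t] using sum_can_char_power_diagonal[OF inj]
    by (simp add: power2_eq_square)
qed

lemma power_sum_complementary_nonzero:
  fixes a :: "'a::field"
  assumes inj: "inj (\<lambda>x::'a. x ^ s)"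
  shows "a ^ s + (1 - a) ^ s \<noteq> 0"
proof
  assume "a ^ s + (1 - a) ^ s = 0"
  then have "a ^ s = (-1) ^ s * (1 - a) ^ s"
    by (simp add: power_minus_one_if_inj[OF inj] eq_neg_iff_add_eq_0)
  also have "\<dots> = (a - 1) ^ s"
    by (simp flip: power_mult_distrib)
  finally show False
    using injD[OF inj] by fastforce
qed

lemma sum_card_power_level_sets:
  assumes inj: "inj (\<lambda>x::'a::{field,finite}. x ^ s)"
  shows "(\<Sum>t\<in>UNIV - {0}. card {a::'a. a ^ s + (1 - a) ^ s = inverse (t ^ s)}) = CARD('a)"
proof -
  let ?G = "\<lambda>a::'a. a ^ s + (1 - a) ^ s"
  have "(\<Sum>t\<in>UNIV - {0}. card {a. ?G a = inverse (t ^ s)}) =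
    (\<Sum>t\<in>UNIV. card {a. ?G a = inverse (t ^ s)})"
    using power_sum_complementary_nonzero[OF inj] pos_if_inj_power[OF inj]
    by (intro sum.mono_neutral_left) (auto simp: zero_power)
  also have "\<dots> = (\<Sum>v\<in>UNIV. card {a. ?G a = v})"
    using sum_reindex_inj_finite[of "\<lambda>t. inverse (t ^ s)" "\<lambda>v. card {a. ?G a = v}"] inj
    by (simp add: inj_def)
  also have "\<dots> = CARD('a)"
    using sum_fun_comp[of UNIV UNIV ?G "\<lambda>_. 1::nat"] by simp
  finally show ?thesis .
qed

section \<open>Divisibility by three\<close>

lemma int_square_cong_one_mod_3: "\<not> 3 dvd (z::int) \<Longrightarrow> [z * z = 1] (mod 3)"
proof -
  assume "\<not> 3 dvd z"
  then have "z mod 3 = 1 \<or> z mod 3 = 2" by presburger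
  then have "(z mod 3 * (z mod 3)) mod 3 = 1" by auto
  then show ?thesis unfolding cong_def by (simp add: mod_mult_eq)
qed

lemma triple_sum_cong_CARD_mod_3:
  fixes w :: "'a::{field,finite} \<Rightarrow> int"
  assumes w0: "w 0 = 0" and wsum: "(\<Sum>b\<in>UNIV. w b) = int CARD('a)"
    and not_dvd: "\<And>b. b \<noteq> 0 \<Longrightarrow> \<not> 3 dvd w b" and t: "t \<noteq> 0"
  shows "[(\<Sum>b\<in>UNIV. w b * w b * w (t * b)) = int CARD('a)] (mod 3)"
proof -
  have "[w b * w b * w (t * b) = w (t * b)] (mod 3)" for b
  proof (cases "b = 0")
    case False
    then show ?thesis
      using cong_scalar_right[OF int_square_cong_one_mod_3[OF not_dvd[OF False]]] by simp
  qed (simp add: w0)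
  then have "[(\<Sum>b\<in>UNIV. w b * w b * w (t * b)) = (\<Sum>b\<in>UNIV. w (t * b))] (mod 3)"
    by (rule cong_sum)
  also have "(\<Sum>b\<in>UNIV. w (t * b)) = int CARD('a)"
    using sum_reindex_inj_finite[of "\<lambda>b. t * b" w] t wsum by (simp add: inj_def)
  finally show ?thesis .
qed

lemma exists_three_dvd_if_triple_sums:
  fixes w :: "'a::{field,finite} \<Rightarrow> int" and M :: "'a \<Rightarrow> nat"
  assumes q: "CARD('a) > 2" "\<not> 3 dvd CARD('a)"
    and w0: "w 0 = 0" and wsum: "(\<Sum>b\<in>UNIV. w b) = int CARD('a)"
    and triple: "\<And>t. t \<noteq> 0 \<Longrightarrow> (\<Sum>b\<in>UNIV. w b * w b * w (t * b)) = int (CARD('a) ^ 2 * M t)"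
    and Msum: "(\<Sum>t\<in>UNIV - {0}. M t) = CARD('a)"
  shows "\<exists>b\<noteq>0. 3 dvd w b"
proof (rule ccontr)
  let ?q = "int CARD('a)"
  assume "\<not> (\<exists>b\<noteq>0. 3 dvd w b)"
  then have not_dvd: "\<And>b. b \<noteq> 0 \<Longrightarrow> \<not> 3 dvd w b" by blast
  have M_cong: "[int (M t) = ?q] (mod 3)" if "t \<noteq> 0" for t
  proof -
    have "[?q * ?q * int (M t) = ?q] (mod 3)"
      using triple_sum_cong_CARD_mod_3[OF w0 wsum not_dvd that] triple[OF that]
      by (simp add: power2_eq_square)
    moreover have "[?q * ?q = 1] (mod 3)"
      using q(2) by (intro int_square_cong_one_mod_3) presburger
    ultimately show ?thesis
      by (metis cong_scalar_right cong_sym cong_trans mult_1)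
  qed
  have q_cong: "[?q = (?q - 1) * ?q] (mod 3)"
  proof -
    have "?q = (\<Sum>t\<in>UNIV - {0}. int (M t))" using Msum by (simp flip: of_nat_sum)
    also have "[\<dots> = (\<Sum>t\<in>UNIV - {0::'a}. ?q)] (mod 3)"
      by (rule cong_sum) (use M_cong in auto)
    also have "(\<Sum>t\<in>UNIV - {0::'a}. ?q) = (?q - 1) * ?q"
      by (simp add: card_Diff_singleton)
    finally show ?thesis .
  qed
  have q_mod: "?q mod 3 = 2"
  proof (rule ccontr)
    assume "?q mod 3 \<noteq> 2"
    then have "3 dvd ?q - 1"
      using q(2) by presburger
    then have "3 dvd (?q - 1) * ?q" by simp
    then show False
      using cong_dvd_iff[OF q_cong] q(2) by presburger
  qed
  have "2 \<le> M t" if "t \<in> UNIV - {0}" for t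
  proof -
    have "int (M t) mod 3 = 2" using M_cong[of t] that q_mod unfolding cong_def by simp
    then show ?thesis by presburger
  qed
  then have "card (UNIV - {0::'a}) * 2 \<le> CARD('a)"
    using sum_bounded_below[of "UNIV - {0::'a}" 2 M] Msum by simp
  then show False
    using q(1) by (simp add: card_Diff_singleton)
qed

lemma exists_three_dvd_fourier_coeff_power:
  fixes w :: "'a::{field,finite} \<Rightarrow> int"
  assumes q: "CARD('a) > 2" and inj: "inj (\<lambda>x::'a. x ^ s)"
    and w: "\<And>b. fourier_coeff (\<lambda>x. x ^ s) b = of_int (w b)"
    and w_cong: "\<And>b. [w b = int CARD('a)] (mod int CHAR('a))"
  shows "\<exists>b\<noteq>0. 3 dvd w b"
proof (cases "3 dvd CARD('a)")
  case True
  then have "CHAR('a) = 3" by (intro prime_dvd_CARD_eq_CHAR[symmetric]) simp_all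
  then have "3 dvd w 1"
    using cong_dvd_iff[OF w_cong[of 1]] True by presburger
  then show ?thesis by (intro exI[of _ 1]) simp
next
  case False
  show ?thesis
  proof (rule exists_three_dvd_if_triple_sums[OF q False])
    show "w 0 = 0"
      using fourier_coeff_0_inj[OF inj] w[of 0] by simp
    have "of_int (\<Sum>b\<in>UNIV. w b) = (of_int (int CARD('a)) :: complex)"
      using sum_fourier_coeff[of "\<lambda>x::'a. x ^ s"] pos_if_inj_power[OF inj]
      by (simp add: w can_char_0 zero_power)
    then show "(\<Sum>b\<in>UNIV. w b) = int CARD('a)"
      by (simp only: of_int_eq_iff)
    fix t :: 'a assume "t \<noteq> 0"
    have "of_int (\<Sum>b\<in>UNIV. w b * w b * w (t * b)) =
      (of_int (int (CARD('a) ^ 2 * card {a::'a. a ^ s + (1 - a) ^ s = inverse (t ^ s)})) :: complex)"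
      using sum_fourier_coeff_power_triple[OF inj \<open>t \<noteq> 0\<close>] by (simp add: w)
    then show "(\<Sum>b\<in>UNIV. w b * w b * w (t * b)) =
      int (CARD('a) ^ 2 * card {a::'a. a ^ s + (1 - a) ^ s = inverse (t ^ s)})"
      by (simp only: of_int_eq_iff)
  qed (rule sum_card_power_level_sets[OF inj])
qed

theorem mainTheorem3:
  fixes s :: nat
  assumes "CARD('a::{field,finite}) > 2"
    and "s > 0"
    and "[s = 1] (mod (CHAR('a) - 1))"
    and "coprime s (CARD('a) - 1)"
  shows "\<exists>k::int. frakD (\<lambda>x::'a. x ^ s) = of_int (3 * k)"
proof -
  have hom: "((of_nat j :: 'a) * x) ^ s = of_nat j * x ^ s" for j x
    by (rule of_nat_mult_power_cong_one[OF assms(2,3)])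
  obtain w where "\<forall>b. fourier_coeff (\<lambda>x::'a. x ^ s) b = of_int (w b) \<and>
      [w b = int CARD('a)] (mod int CHAR('a))"
    using fourier_coeff_integral_cong_CARD[of "\<lambda>x::'a. x ^ s", OF hom] by (elim exE)
  then have w: "\<And>b. fourier_coeff (\<lambda>x::'a. x ^ s) b = of_int (w b)"
    and w_cong: "\<And>b. [w b = int CARD('a)] (mod int CHAR('a))"
    by simp_all
  obtain b where "b \<noteq> 0" "3 dvd w b"
    using exists_three_dvd_fourier_coeff_power[OF assms(1) inj_power_if_coprime[OF assms(2,4)] w w_cong]
    by (elim exE conjE)
  then have "3 dvd (\<Prod>a\<in>UNIV - {0}. w a)"
    using dvd_prodI[of "UNIV - {0}" b w] by (auto intro: dvd_trans)
  then obtain k where k: "(\<Prod>a\<in>UNIV - {0}. w a) = 3 * k" by (rule dvdE)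
  have "frakD (\<lambda>x::'a. x ^ s) = of_int (\<Prod>a\<in>UNIV - {0}. w a)"
    unfolding frakD_def w by (rule of_int_prod[symmetric])
  then show ?thesis unfolding k ..
qed

end
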